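(* Let $X$ be a finite set of clocks and $P$ a finite set of parameters, and let $Z$ be a parametric zone over $(X,P)$, written as a finite conjunction of constraints $Z=\bigwedge_i \phi_i$. Then: (1) The upper temporal bound of $Z$ satisfies $$\bigcup_{\psi\in U_{Temp}(Z)} UB(Z,\psi) \;=\; \Big\{\, v+\delta_{sup} \;\Big|\; v\in Z,\ \delta_{sup}=\sup\{\delta\in\mathbb{R}_{\ge 0}\mid v+\delta\in Z\}\in\mathbb{R}_{\ge 0}\,\Big\}.$$ (2) The lower temporal bound of $Z$ satisfies $$\bigcup_{\psi\in L_{Temp}(Z)} LB(Z,\psi) \;=\; \Big\{\, v-\delta_{sup} \;\Big|\; v\in Z,\ \delta_{sup}=\sup\{\delta\in\mathbb{R}_{\ge 0}\mid v-\delta\in Z\}\in\mathbb{R}_{\ge 0}\,\Big\}.$$ (In particular, the supremum is required to be finite; if $Z$ has no upper temporal constraint, both sides of (1) are empty.)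
   Context: A valuation is a pair $v=(v_X,v_P)$ with $v_X:X\to\mathbb{R}_{\ge0}$ and $v_P:P\to\mathbb{Q}_{\ge0}$. A linear term over $P$ is an expression $k_0+\sum_j k_j p_j$ with $k_j\in\mathbb{Q}$, $p_j\in P$; $v(plt)$ denotes its value under $v_P$. A parametric zone is a finite conjunction of constraints of the forms $x\sim plt$, $x-y\sim plt$, or $plt'\sim plt$, with $x,y\in X$, $plt,plt'$ linear terms over $P$ and ${\sim}\in\{<,\le,=,\ge,>\}$; it is identified with the set of valuations satisfying it. For $\delta\ge 0$, $v+\delta$ (resp. $v-\delta$) is the valuation that adds (resp. subtracts) $\delta$ to every clock value and leaves parameters unchanged; $v-\delta\in Z$ requires in particular all clock values to be nonnegative. Upper temporal constraints of $Z$, denoted $U_{Temp}(Z)$, are its conjuncts $x\sim plt$ with ${\sim}\in\{<,\le,=\}$; lower temporal constraints $L_{Temp}(Z)$ are its conjuncts $x\sim plt$ with ${\sim}\in\{>,\ge,=\}$, together with the implicit constraints $x\ge 0$ for every $x\in X$. All other conjuncts (of the form $x-y\sim plt$ or $plt'\sim plt$) are called diagonal constraints. The upper temporal closure $\overline{Z}^{U}$ of $Z$ is obtained by keeping diagonal constraints unchanged, making every upper temporal constraint non-strict ($<$ becomes $\le$) and every lower temporal constraint strict ($\ge$ becomes $>$, including the implicit $x\ge0$ which becomes $x>0$). The lower temporal closure $\overline{Z}^{L}$ is defined symmetrically: lower temporal constraints made non-strict, upper temporal constraints made strict, diagonal constraints unchanged. For an upper temporal constraint $\psi=(x\sim plt)$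 of $Z$, the temporal upper bound $UB(Z,\psi)$ is the zone obtained by replacing $x\le plt$ by $x=plt$ in $Z$ if $\psi$ is non-strict, or in $\overline{Z}^{U}$ if $\psi$ is strict. For a lower temporal constraint $\psi=(x\sim plt)$, the temporal lower bound $LB(Z,\psi)$ is obtained by replacing $x\ge plt$ by $x=plt$ in $Z$ if $\psi$ is non-strict, or in $\overline{Z}^{L}$ if $\psi$ is strict. *)

theory Defs
  imports Complex_Main
begin

datatype cmp = Lt | Le | Eq | Ge | Gt

fun cmp_sem :: "cmp \<Rightarrow> 'a::linorder \<Rightarrow> 'a \<Rightarrow> bool" where
  "cmp_sem Lt a b = (a < b)"
| "cmp_sem Le a b = (a \<le> b)"
| "cmp_sem Eq a b = (a = b)"
| "cmp_sem Ge a b = (a \<ge> b)"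
| "cmp_sem Gt a b = (a > b)"

text \<open>Linear terms k0 + sum_j kj pj over the (finite) parameter type, rational coefficients.\<close>
type_synonym 'p lterm = "rat \<times> ('p \<Rightarrow> rat)"

definition lt_val :: "('p::finite \<Rightarrow> rat) \<Rightarrow> 'p lterm \<Rightarrow> rat" where
  "lt_val vp t = fst t + (\<Sum>p\<in>UNIV. snd t p * vp p)"

definition lt_zero :: "'p lterm" where
  "lt_zero = (0, \<lambda>_. 0)"

datatype ('x, 'p) constr =
    ClkC 'x cmp "'p lterm"
  | DiffC 'x 'x cmp "'p lterm"
  | ParC "'p lterm" cmp "'p lterm"

type_synonym ('x, 'p) valuation = "('x \<Rightarrow> real) \<times> ('p \<Rightarrow> rat)"

definition is_valuation :: "('x, 'p) valuation \<Rightarrow> bool" where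
  "is_valuation v \<longleftrightarrow> (\<forall>x. fst v x \<ge> 0) \<and> (\<forall>p. snd v p \<ge> 0)"

fun sat :: "('x, 'p::finite) valuation \<Rightarrow> ('x, 'p) constr \<Rightarrow> bool" where
  "sat v (ClkC x k t) = cmp_sem k (fst v x) (of_rat (lt_val (snd v) t))"
| "sat v (DiffC x y k t) = cmp_sem k (fst v x - fst v y) (of_rat (lt_val (snd v) t))"
| "sat v (ParC t' k t) = cmp_sem k (lt_val (snd v) t') (lt_val (snd v) t)"

definition zone_sem :: "('x, 'p::finite) constr set \<Rightarrow> ('x, 'p) valuation set" where
  "zone_sem Z = {v. is_valuation v \<and> (\<forall>c\<in>Z. sat v c)}"

definition delay :: "('x, 'p) valuation \<Rightarrow> real \<Rightarrow> ('x, 'p) valuation" where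
  "delay v d = ((\<lambda>x. fst v x + d), snd v)"

definition undelay :: "('x, 'p) valuation \<Rightarrow> real \<Rightarrow> ('x, 'p) valuation" where
  "undelay v d = ((\<lambda>x. fst v x - d), snd v)"

text \<open>Upper / lower temporal constraints (the lower ones include the implicit x >= 0).\<close>
definition U_Temp :: "('x, 'p) constr set \<Rightarrow> ('x, 'p) constr set" where
  "U_Temp Z = {c \<in> Z. \<exists>x k t. c = ClkC x k t \<and> k \<in> {Lt, Le, Eq}}"

definition L_Temp :: "('x, 'p) constr set \<Rightarrow> ('x, 'p) constr set" where
  "L_Temp Z = {c \<in> Z. \<exists>x k t. c = ClkC x k t \<and> k \<in> {Gt, Ge, Eq}}
              \<union> range (\<lambda>x. ClkC x Ge lt_zero)"

text \<open>Upper closure: upper constraints non-strict, lower constraints strict,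
  diagonal unchanged.  An equality is both upper and lower, so it yields
  its strict lower part and its non-strict upper part.\<close>
fun uc_constr :: "('x, 'p) constr \<Rightarrow> ('x, 'p) constr set" where
  "uc_constr (ClkC x Lt t) = {ClkC x Le t}"
| "uc_constr (ClkC x Le t) = {ClkC x Le t}"
| "uc_constr (ClkC x Eq t) = {ClkC x Gt t, ClkC x Le t}"
| "uc_constr (ClkC x Ge t) = {ClkC x Gt t}"
| "uc_constr (ClkC x Gt t) = {ClkC x Gt t}"
| "uc_constr c = {c}"

fun lc_constr :: "('x, 'p) constr \<Rightarrow> ('x, 'p) constr set" where
  "lc_constr (ClkC x Lt t) = {ClkC x Lt t}"
| "lc_constr (ClkC x Le t) = {ClkC x Lt t}"
| "lc_constr (ClkC x Eq t) = {ClkC x Ge t, ClkC x Lt t}"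
| "lc_constr (ClkC x Ge t) = {ClkC x Ge t}"
| "lc_constr (ClkC x Gt t) = {ClkC x Ge t}"
| "lc_constr c = {c}"

definition upper_closure :: "('x, 'p) constr set \<Rightarrow> ('x, 'p) constr set" where
  "upper_closure Z = (\<Union>c\<in>Z. uc_constr c) \<union> range (\<lambda>x. ClkC x Gt lt_zero)"

definition lower_closure :: "('x, 'p) constr set \<Rightarrow> ('x, 'p) constr set" where
  "lower_closure Z = (\<Union>c\<in>Z. lc_constr c) \<union> range (\<lambda>x. ClkC x Ge lt_zero)"

text \<open>Temporal upper / lower bounds (only meaningful for temporal constraints).\<close>
fun UB :: "('x, 'p) constr set \<Rightarrow> ('x, 'p) constr \<Rightarrow> ('x, 'p) constr set" where
  "UB Z (ClkC x k t) =
     ((if k = Lt then upper_closure Z else Z) - {ClkC x Le t}) \<union> {ClkC x Eq t}"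
| "UB Z _ = Z"

fun LB :: "('x, 'p) constr set \<Rightarrow> ('x, 'p) constr \<Rightarrow> ('x, 'p) constr set" where
  "LB Z (ClkC x k t) =
     ((if k = Gt then lower_closure Z else Z) - {ClkC x Ge t}) \<union> {ClkC x Eq t}"
| "LB Z _ = Z"

end

theory Submission
  imports Defs
begin

text \<open>
  Along a delay all clocks advance together, so each clock constraint admits an interval of
  delays, while diagonal and parameter constraints admit all delays or none.  Hence the delays
  keeping v in Z form an interval from 0 to some s, and if s is finite an upper constraint x \<sim> t
  is tight at v + s, for otherwise the delay could be prolonged.  If no strict one is tight,
  v + s itself lies in Z; if a strict one is tight, then s > 0 and v + s satisfies the upper
  closure, its strict lower bounds because v + s lies strictly after v.  Conversely, a valuation
  on a non-strict bound is in Z and admits no delay, and one on a strict bound can be moved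
  slightly back in time into Z, from where its maximal delay leads back to it.

  Time reversal, negating all clocks and all clock bounds, exchanges upper and lower constraints
  and the two closures; it reduces the second statement to the first once the implicit
  constraints x \<ge> 0 are made explicit.
\<close>

abbreviation lt_rval :: "('x, 'p::finite) valuation \<Rightarrow> 'p lterm \<Rightarrow> real" where
  "lt_rval v t \<equiv> of_rat (lt_val (snd v) t)"

lemma delay_simps [simp]:
  "fst (delay v d) = (\<lambda>x. fst v x + d)" "snd (delay v d) = snd v"
  "fst (undelay v d) = (\<lambda>x. fst v x - d)" "snd (undelay v d) = snd v"
  by (simp_all add: delay_def undelay_def)

lemma delay_0 [simp]: "delay v 0 = v"
  by (simp add: delay_def)

lemma undelay_0 [simp]: "undelay v 0 = v"
  by (simp add: undelay_def)

lemma delay_delay [simp]: "delay (delay v a) b = delay v (a + b)"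
  by (simp add: delay_def add.assoc)

lemma delay_undelay: "delay (undelay v a) b = undelay v (a - b)"
  by (simp add: delay_def undelay_def algebra_simps)

lemma lt_val_zero [simp]: "lt_val vp lt_zero = 0"
  by (simp add: lt_val_def lt_zero_def)

text \<open>Unlike \<^const>\<open>zone_sem\<close>, \<^term>\<open>models\<close> does not force clocks to be nonnegative,
  so that time reversal, which negates clocks, maps models to models.\<close>

definition models :: "('x, 'p::finite) constr set \<Rightarrow> ('x, 'p) valuation set" where
  "models C = {v. (\<forall>p. 0 \<le> snd v p) \<and> (\<forall>c\<in>C. sat v c)}"

definition clocks_nonneg :: "('x, 'p) constr set" where
  "clocks_nonneg = range (\<lambda>x. ClkC x Ge lt_zero)"

lemma zone_sem_eq_models: "zone_sem Z = models (Z \<union> clocks_nonneg)"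
  by (force simp: zone_sem_def models_def is_valuation_def clocks_nonneg_def)

section \<open>Delaying to an upper bound\<close>

definition uclosure :: "('x, 'p) constr set \<Rightarrow> ('x, 'p) constr set" where
  "uclosure C = (\<Union>c\<in>C. uc_constr c)"

text \<open>As \<^const>\<open>UB\<close>, but keeping x \<le> t, which the added equation implies.\<close>
fun ub_constrs :: "('x, 'p) constr set \<Rightarrow> ('x, 'p) constr \<Rightarrow> ('x, 'p) constr set" where
  "ub_constrs C (ClkC x k t) = (if k = Lt then uclosure C else C) \<union> {ClkC x Eq t}"
| "ub_constrs C _ = C"

definition delay_set :: "('x, 'p::finite) constr set \<Rightarrow> ('x, 'p) valuation \<Rightarrow> real set" where
  "delay_set C v = {\<delta>. \<delta> \<ge> 0 \<and> delay v \<delta> \<in> models C}"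

lemma sat_delay_between:
  assumes "sat v c" "sat (delay v d') c" "0 \<le> d" "d \<le> d'"
  shows "sat (delay v d) c"
proof (cases c)
  case (ClkC x k t)
  then show ?thesis using assms by (cases k) auto
qed (use assms in auto)

lemma delay_models_between:
  assumes "v \<in> models C" "delay v d' \<in> models C" "0 \<le> d" "d \<le> d'"
  shows "delay v d \<in> models C"
  using assms sat_delay_between[of v _ d' d] by (auto simp: models_def)

lemma delay_below_Sup_delay_set:
  assumes "v \<in> models C" "0 \<le> d" "d < Sup (delay_set C v)"
  shows "delay v d \<in> models C"
proof -
  have "0 \<in> delay_set C v"
    using assms(1) by (simp add: delay_set_def)
  then obtain d' where "d' \<in> delay_set C v" "d < d'"
    using less_cSupD[OF _ assms(3)] by blast
  then show ?thesis
    using delay_models_between[OF assms(1) _ assms(2)] by (auto simp: delay_set_def)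
qed

lemma eventually_delay_sat:
  assumes "sat w c"
    and "\<And>x k t. c = ClkC x k t \<Longrightarrow> k \<in> {Lt, Le, Eq} \<Longrightarrow> fst w x \<noteq> lt_rval w t"
  shows "\<forall>\<^sub>F e in at_right 0. sat (delay w e) c"
proof (cases c)
  case (ClkC x k t)
  define b where "b = (if fst w x < lt_rval w t then lt_rval w t - fst w x else 1)"
  have "0 < b"
    by (simp add: b_def)
  then show ?thesis
    using assms by (intro eventually_at_rightI[of 0 b]) (cases k; auto simp: ClkC b_def split: if_splits)
qed (use assms in auto)

lemma eventually_undelay_sat:
  assumes "\<forall>c'\<in>uc_constr c. sat w c'"
  shows "\<forall>\<^sub>F e in at_right 0. sat (undelay w e) c"
proof (cases c)
  case (ClkC x k t)
  define b where "b = (if lt_rval w t < fst w x then fst w x - lt_rval w t else 1)"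
  have "0 < b"
    by (simp add: b_def)
  then show ?thesis
    using assms by (intro eventually_at_rightI[of 0 b]) (cases k; auto simp: ClkC b_def split: if_splits)
qed (use assms in auto)

lemma sat_uc_constr_at_limit:
  assumes below: "\<And>d. 0 \<le> d \<Longrightarrow> d < s \<Longrightarrow> sat (delay v d) c"
    and "0 < s" and "c' \<in> uc_constr c"
  shows "sat (delay v s) c'"
proof (cases c)
  case (ClkC x k t)
  have at: "cmp_sem k (fst v x + d) (lt_rval v t)" if "0 \<le> d" "d < s" for d
    using below[OF that] by (simp add: ClkC)
  have limit: "fst v x + s \<le> lt_rval v t" if "k \<in> {Lt, Le}"
  proof (rule dense_le_bounded[of "fst v x"])
    fix w assume "fst v x < w" "w < fst v x + s"
    then show "w \<le> lt_rval v t"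
      using at[of "w - fst v x"] that by auto
  qed (use \<open>0 < s\<close> in simp)
  show ?thesis
  proof (cases k)
    case Eq
    then show ?thesis using at[of 0] at[of "s / 2"] \<open>0 < s\<close> by auto
  qed (use assms ClkC limit at[of 0] in auto)
qed (use assms in auto)

lemma sat_of_uc_constr:
  assumes "\<forall>c'\<in>uc_constr c. sat w c'"
    and "\<And>x t. c = ClkC x Lt t \<Longrightarrow> fst w x \<noteq> lt_rval w t"
  shows "sat w c"
proof (cases c)
  case (ClkC x k t)
  then show ?thesis using assms by (cases k) auto
qed (use assms in auto)

lemma eventually_delay_models:
  assumes "finite C" "w \<in> models C"
    and "\<And>x k t. ClkC x k t \<in> U_Temp C \<Longrightarrow> fst w x \<noteq> lt_rval w t"
  shows "\<forall>\<^sub>F e in at_right 0. delay w e \<in> models C"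
proof -
  have "\<forall>\<^sub>F e in at_right 0. \<forall>c\<in>C. sat (delay w e) c"
    using assms by (intro eventually_ball_finite ballI eventually_delay_sat)
      (auto simp: models_def U_Temp_def)
  then show ?thesis
    using assms(2) by (auto simp: models_def elim: eventually_mono)
qed

lemma eventually_undelay_models:
  assumes "finite C" "w \<in> models (uclosure C)"
  shows "\<forall>\<^sub>F e in at_right 0. undelay w e \<in> models C"
proof -
  have "\<forall>\<^sub>F e in at_right 0. \<forall>c\<in>C. sat (undelay w e) c"
    using assms by (intro eventually_ball_finite ballI eventually_undelay_sat)
      (auto simp: models_def uclosure_def)
  then show ?thesis
    using assms(2) by (auto simp: models_def elim: eventually_mono)
qed

lemma delay_set_tight_upper_bound:
  assumes "ClkC x k t \<in> U_Temp C" "fst w x = lt_rval w t" "w \<in> models C"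
  shows "delay_set C w = {0}"
proof -
  have "d = 0" if "d \<in> delay_set C w" for d
    using that assms by (auto simp: delay_set_def models_def U_Temp_def)
  then show ?thesis
    using assms(3) by (auto simp: delay_set_def)
qed

lemma undelay_from_strict_bound:
  assumes "finite C" "ClkC x Lt t \<in> C" "w \<in> models (uclosure C)" "fst w x = lt_rval w t"
  obtains \<epsilon> where "0 < \<epsilon>" "undelay w \<epsilon> \<in> models C" "delay_set C (undelay w \<epsilon>) = {0..<\<epsilon>}"
proof -
  obtain b where "0 < b" and b: "\<And>e. 0 < e \<Longrightarrow> e < b \<Longrightarrow> undelay w e \<in> models C"
    using eventually_undelay_models[OF assms(1,3)] by (auto simp: eventually_at_right_field)
  define \<epsilon> where "\<epsilon> = b / 2"
  have "0 < \<epsilon>" "\<epsilon> < b"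
    using \<open>0 < b\<close> by (auto simp: \<epsilon>_def)
  moreover have "delay_set C (undelay w \<epsilon>) = {0..<\<epsilon>}"
  proof (intro set_eqI iffI)
    fix d assume "d \<in> delay_set C (undelay w \<epsilon>)"
    then show "d \<in> {0..<\<epsilon>}"
      using assms(2,4) by (auto simp: delay_set_def models_def delay_undelay)
  next
    fix d assume "d \<in> {0..<\<epsilon>}"
    then show "d \<in> delay_set C (undelay w \<epsilon>)"
      using b[of "\<epsilon> - d"] \<open>\<epsilon> < b\<close> by (auto simp: delay_set_def delay_undelay)
  qed
  ultimately show thesis
    using that b by blast
qed

lemma models_ub_constrs_imp_Sup_delay:
  assumes "finite C" "\<psi> \<in> U_Temp C" "w \<in> models (ub_constrs C \<psi>)"
  shows "\<exists>v\<in>models C. bdd_above (delay_set C v) \<and> w = delay v (Sup (delay_set C v))"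
proof -
  obtain x k t where \<psi>: "\<psi> = ClkC x k t" "\<psi> \<in> C" "k \<in> {Lt, Le, Eq}"
    using assms(2) by (auto simp: U_Temp_def)
  have tight: "fst w x = lt_rval w t"
    using assms(3) by (auto simp: \<psi> models_def)
  show ?thesis
  proof (cases "k = Lt")
    case True
    have "w \<in> models (uclosure C)"
      using assms(3) by (simp add: \<psi> True models_def)
    from \<psi> True have "ClkC x Lt t \<in> C"
      by simp
    then obtain \<epsilon> where
      "0 < \<epsilon>" "undelay w \<epsilon> \<in> models C" "delay_set C (undelay w \<epsilon>) = {0..<\<epsilon>}"
      by (rule undelay_from_strict_bound[OF assms(1) _ \<open>w \<in> models (uclosure C)\<close> tight])
    then show ?thesis
      by (intro bexI[of _ "undelay w \<epsilon>"]) (auto simp: delay_undelay)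
  next
    case False
    have "w \<in> models C"
      using assms(3) False by (auto simp: \<psi>(1) models_def)
    then have "delay_set C w = {0}"
      by (rule delay_set_tight_upper_bound[OF assms(2)[unfolded \<psi>(1)] tight])
    with \<open>w \<in> models C\<close> show ?thesis
      by (intro bexI[of _ w]) auto
  qed
qed

lemma Sup_delay_in_uclosure:
  assumes "v \<in> models C" "bdd_above (delay_set C v)" "0 < Sup (delay_set C v)"
  shows "delay v (Sup (delay_set C v)) \<in> models (uclosure C)"
proof -
  have "sat (delay v (Sup (delay_set C v))) c'" if "c \<in> C" "c' \<in> uc_constr c" for c c'
    by (rule sat_uc_constr_at_limit[OF _ assms(3) that(2)])
      (use delay_below_Sup_delay_set[OF assms(1)] that(1) in \<open>auto simp: models_def\<close>)
  then show ?thesis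
    using assms(1) by (auto simp: models_def uclosure_def)
qed

lemma Sup_delay_in_models:
  assumes "v \<in> models C" "bdd_above (delay_set C v)"
    and "\<nexists>x t. ClkC x Lt t \<in> C \<and> fst v x + Sup (delay_set C v) = lt_rval v t"
  shows "delay v (Sup (delay_set C v)) \<in> models C"
proof (cases "Sup (delay_set C v) = 0")
  case False
  define s where "s = Sup (delay_set C v)"
  have "0 \<in> delay_set C v"
    using assms(1) by (simp add: delay_set_def)
  with False have "0 < s"
    using cSup_upper[OF _ assms(2)] by (fastforce simp: s_def)
  then have ucl: "delay v s \<in> models (uclosure C)"
    using Sup_delay_in_uclosure[OF assms(1,2)] by (simp add: s_def)
  have "sat (delay v s) c" if "c \<in> C" for c
  proof (rule sat_of_uc_constr)
    show "\<forall>c'\<in>uc_constr c. sat (delay v s) c'"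
      using ucl \<open>c \<in> C\<close> by (auto simp: models_def uclosure_def)
    show "fst (delay v s) x \<noteq> lt_rval (delay v s) t" if "c = ClkC x Lt t" for x t
      using assms(3) \<open>c \<in> C\<close> that unfolding s_def by (simp only: delay_simps) blast
  qed
  then show ?thesis
    using assms(1) by (simp add: models_def s_def)
qed (use assms(1) in simp)

lemma Max_delay_tight:
  assumes "finite C" "bdd_above (delay_set C v)" "Sup (delay_set C v) \<in> delay_set C v"
  shows "\<exists>x k t. ClkC x k t \<in> U_Temp C \<and> fst v x + Sup (delay_set C v) = lt_rval v t"
proof (rule ccontr)
  define s where "s = Sup (delay_set C v)"
  assume not_tight: "\<not> ?thesis"
  have "delay v s \<in> models C" "0 \<le> s"
    using assms(3) by (simp_all add: s_def delay_set_def)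
  have "\<forall>\<^sub>F e in at_right 0. delay (delay v s) e \<in> models C"
  proof (rule eventually_delay_models[OF assms(1) \<open>delay v s \<in> models C\<close>])
    fix x k t assume "ClkC x k t \<in> U_Temp C"
    then show "fst (delay v s) x \<noteq> lt_rval (delay v s) t"
      using not_tight unfolding s_def by (simp only: delay_simps) blast
  qed
  then have "\<forall>\<^sub>F e in at_right 0. delay v (s + e) \<in> models C"
    by simp
  then obtain b where "0 < b" "\<And>e. 0 < e \<Longrightarrow> e < b \<Longrightarrow> delay v (s + e) \<in> models C"
    by (auto simp: eventually_at_right_field)
  with \<open>0 \<le> s\<close> have "s + b / 2 \<in> delay_set C v"
    by (simp add: delay_set_def)
  then show False
    using cSup_upper[OF _ assms(2)] \<open>0 < b\<close> by (fastforce simp: s_def)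
qed

lemma Sup_delay_in_models_ub_constrs:
  assumes "finite C" "v \<in> models C" "bdd_above (delay_set C v)"
  shows "\<exists>\<psi>\<in>U_Temp C. delay v (Sup (delay_set C v)) \<in> models (ub_constrs C \<psi>)"
proof -
  define s where "s = Sup (delay_set C v)"
  show ?thesis
  proof (cases "\<exists>x t. ClkC x Lt t \<in> C \<and> fst v x + s = lt_rval v t")
    case True
    then obtain x t where "ClkC x Lt t \<in> C" "fst v x + s = lt_rval v t"
      by blast
    moreover from this have "0 < s"
      using assms(2) by (force simp: models_def)
    ultimately have "delay v s \<in> models (ub_constrs C (ClkC x Lt t))"
      using Sup_delay_in_uclosure[OF assms(2,3)] by (simp add: models_def s_def)
    moreover have "ClkC x Lt t \<in> U_Temp C"
      using \<open>ClkC x Lt t \<in> C\<close> by (simp add: U_Temp_def)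
    ultimately show ?thesis
      unfolding s_def by blast
  next
    case False
    then have "delay v s \<in> models C"
      using Sup_delay_in_models[OF assms(2,3)] by (simp add: s_def)
    moreover have "0 \<le> s"
      using assms(2) cSup_upper[OF _ assms(3), of 0] by (simp add: s_def delay_set_def)
    ultimately obtain x k t where "ClkC x k t \<in> U_Temp C" "fst v x + s = lt_rval v t"
      using Max_delay_tight[OF assms(1,3)] by (auto simp: s_def delay_set_def)
    moreover from this have "k \<noteq> Lt"
      using False unfolding U_Temp_def by blast
    ultimately have "delay v s \<in> models (ub_constrs C (ClkC x k t))"
      using \<open>delay v s \<in> models C\<close> by (simp add: models_def)
    with \<open>ClkC x k t \<in> U_Temp C\<close> show ?thesis
      unfolding s_def by blast
  qed
qed

theorem ub_constrs_eq_Sup_delays: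
  assumes "finite C"
  shows "(\<Union>\<psi>\<in>U_Temp C. models (ub_constrs C \<psi>)) =
    {delay v d | v d. v \<in> models C \<and> bdd_above (delay_set C v) \<and> d = Sup (delay_set C v)}"
proof (intro set_eqI iffI)
  fix w assume "w \<in> (\<Union>\<psi>\<in>U_Temp C. models (ub_constrs C \<psi>))"
  then obtain \<psi> where "\<psi> \<in> U_Temp C" "w \<in> models (ub_constrs C \<psi>)"
    by blast
  from models_ub_constrs_imp_Sup_delay[OF assms this]
  show "w \<in> {delay v d | v d. v \<in> models C \<and> bdd_above (delay_set C v) \<and> d = Sup (delay_set C v)}"
    by blast
next
  fix w assume "w \<in> {delay v d | v d. v \<in> models C \<and> bdd_above (delay_set C v) \<and> d = Sup (delay_set C v)}"
  then obtain v where "v \<in> models C" "bdd_above (delay_set C v)" "w = delay v (Sup (delay_set C v))"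
    by blast
  with Sup_delay_in_models_ub_constrs[OF assms] show "w \<in> (\<Union>\<psi>\<in>U_Temp C. models (ub_constrs C \<psi>))"
    by blast
qed

section \<open>Time reversal\<close>

definition lclosure :: "('x, 'p) constr set \<Rightarrow> ('x, 'p) constr set" where
  "lclosure C = (\<Union>c\<in>C. lc_constr c)"

fun lb_constrs :: "('x, 'p) constr set \<Rightarrow> ('x, 'p) constr \<Rightarrow> ('x, 'p) constr set" where
  "lb_constrs C (ClkC x k t) = (if k = Gt then lclosure C else C) \<union> {ClkC x Eq t}"
| "lb_constrs C _ = C"

definition lower_constrs :: "('x, 'p) constr set \<Rightarrow> ('x, 'p) constr set" where
  "lower_constrs C = {c \<in> C. \<exists>x k t. c = ClkC x k t \<and> k \<in> {Gt, Ge, Eq}}"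

definition undelay_set :: "('x, 'p::finite) constr set \<Rightarrow> ('x, 'p) valuation \<Rightarrow> real set" where
  "undelay_set C v = {\<delta>. \<delta> \<ge> 0 \<and> undelay v \<delta> \<in> models C}"

fun cmp_flip :: "cmp \<Rightarrow> cmp" where
  "cmp_flip Lt = Gt"
| "cmp_flip Le = Ge"
| "cmp_flip Eq = Eq"
| "cmp_flip Ge = Le"
| "cmp_flip Gt = Lt"

lemma cmp_flip_cmp_flip [simp]: "cmp_flip (cmp_flip k) = k"
  by (cases k) auto

lemma cmp_sem_cmp_flip [simp]:
  fixes a b :: "'a::linordered_ab_group_add"
  shows "cmp_sem (cmp_flip k) (- a) (- b) = cmp_sem k a b"
  by (cases k) auto

definition lt_neg :: "'p lterm \<Rightarrow> 'p lterm" where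
  "lt_neg t = (- fst t, \<lambda>p. - snd t p)"

lemma lt_neg_lt_neg [simp]: "lt_neg (lt_neg t) = t"
  by (simp add: lt_neg_def)

lemma lt_val_lt_neg [simp]: "lt_val vp (lt_neg t) = - lt_val vp t"
  by (simp add: lt_val_def lt_neg_def sum_negf)

fun mirror_constr :: "('x, 'p) constr \<Rightarrow> ('x, 'p) constr" where
  "mirror_constr (ClkC x k t) = ClkC x (cmp_flip k) (lt_neg t)"
| "mirror_constr (DiffC x y k t) = DiffC x y (cmp_flip k) (lt_neg t)"
| "mirror_constr (ParC t' k t) = ParC t' k t"

definition mirror_val :: "('x, 'p) valuation \<Rightarrow> ('x, 'p) valuation" where
  "mirror_val v = ((\<lambda>x. - fst v x), snd v)"

lemma mirror_constr_mirror_constr [simp]: "mirror_constr (mirror_constr c) = c"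
  by (cases c) auto

lemma mirror_val_mirror_val [simp]: "mirror_val (mirror_val v) = v"
  by (simp add: mirror_val_def)

lemma inj_mirror_constr: "inj mirror_constr"
  by (metis injI mirror_constr_mirror_constr)

lemma inj_mirror_val: "inj mirror_val"
  by (metis injI mirror_val_mirror_val)

lemma sat_mirror [simp]: "sat (mirror_val v) (mirror_constr c) = sat v c"
proof (cases c)
  case (ClkC x k t)
  then show ?thesis
    using cmp_sem_cmp_flip[of k "fst v x"] by (simp add: mirror_val_def of_rat_minus)
next
  case (DiffC x y k t)
  then show ?thesis
    using cmp_sem_cmp_flip[of k "fst v x - fst v y"] by (simp add: mirror_val_def of_rat_minus)
qed (simp add: mirror_val_def)

lemma delay_mirror_val: "delay (mirror_val v) d = mirror_val (undelay v d)"
  by (simp add: delay_def undelay_def mirror_val_def)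

lemma mirror_val_in_models: "mirror_val v \<in> models (mirror_constr ` C) \<longleftrightarrow> v \<in> models C"
  by (simp add: models_def) (simp add: mirror_val_def)

lemma models_mirror: "models (mirror_constr ` C) = mirror_val ` models C"
proof (intro set_eqI iffI)
  fix v assume "v \<in> models (mirror_constr ` C)"
  then have "mirror_val v \<in> models C"
    using mirror_val_in_models[of "mirror_val v"] by simp
  then show "v \<in> mirror_val ` models C"
    by (metis image_eqI mirror_val_mirror_val)
qed (auto simp: mirror_val_in_models)

lemma uc_constr_mirror: "uc_constr (mirror_constr c) = mirror_constr ` lc_constr c"
proof (cases c)
  case (ClkC x k t)
  then show ?thesis by (cases k) auto
qed auto

lemma ub_constrs_mirror:
  "ub_constrs (mirror_constr ` C) (mirror_constr \<psi>) = mirror_constr ` lb_constrs C \<psi>"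
proof (cases \<psi>)
  case (ClkC x k t)
  have "uclosure (mirror_constr ` C) = mirror_constr ` lclosure C"
    by (auto simp: uclosure_def lclosure_def uc_constr_mirror)
  moreover have "cmp_flip k = Lt \<longleftrightarrow> k = Gt"
    by (cases k) auto
  ultimately show ?thesis
    by (auto simp: ClkC)
qed auto

lemma mirror_constr_in_U_Temp:
  "mirror_constr c \<in> U_Temp (mirror_constr ` C) \<longleftrightarrow> c \<in> lower_constrs C"
proof -
  have "mirror_constr c \<in> U_Temp (mirror_constr ` C) \<longleftrightarrow>
      c \<in> C \<and> (\<exists>x k t. mirror_constr c = ClkC x k t \<and> k \<in> {Lt, Le, Eq})"
    by (simp only: U_Temp_def mem_Collect_eq inj_image_mem_iff[OF inj_mirror_constr])
  also have "\<dots> \<longleftrightarrow> c \<in> lower_constrs C"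
  proof (cases c)
    case (ClkC x k t)
    then show ?thesis by (cases k) (auto simp: lower_constrs_def)
  qed (auto simp: lower_constrs_def)
  finally show ?thesis .
qed

lemma U_Temp_mirror: "U_Temp (mirror_constr ` C) = mirror_constr ` lower_constrs C"
proof (intro set_eqI)
  fix c
  have "c \<in> U_Temp (mirror_constr ` C) \<longleftrightarrow> mirror_constr c \<in> lower_constrs C"
    using mirror_constr_in_U_Temp[of "mirror_constr c"] by simp
  also have "\<dots> \<longleftrightarrow> c \<in> mirror_constr ` lower_constrs C"
    by (metis image_iff mirror_constr_mirror_constr)
  finally show "c \<in> U_Temp (mirror_constr ` C) \<longleftrightarrow> c \<in> mirror_constr ` lower_constrs C" .
qed

lemma delay_set_mirror: "delay_set (mirror_constr ` C) (mirror_val v) = undelay_set C v"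
  by (simp add: delay_set_def undelay_set_def delay_mirror_val mirror_val_in_models)

lemma mirror_UN_lb_constrs:
  "mirror_val ` (\<Union>\<psi>\<in>lower_constrs C. models (lb_constrs C \<psi>)) =
    (\<Union>\<psi>\<in>U_Temp (mirror_constr ` C). models (ub_constrs (mirror_constr ` C) \<psi>))"
  by (simp add: U_Temp_mirror image_UN ub_constrs_mirror models_mirror)

lemma mirror_Sup_undelays:
  fixes C :: "('x, 'p::finite) constr set"
  defines "C' \<equiv> mirror_constr ` C"
  shows "mirror_val `
      {undelay v d | v d. v \<in> models C \<and> bdd_above (undelay_set C v) \<and> d = Sup (undelay_set C v)} =
    {delay v d | v d. v \<in> models C' \<and> bdd_above (delay_set C' v) \<and> d = Sup (delay_set C' v)}"
proof (intro set_eqI iffI)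
  fix w assume "w \<in> mirror_val `
      {undelay v d | v d. v \<in> models C \<and> bdd_above (undelay_set C v) \<and> d = Sup (undelay_set C v)}"
  then obtain v where "v \<in> models C" "bdd_above (undelay_set C v)"
    "w = mirror_val (undelay v (Sup (undelay_set C v)))"
    by blast
  then have "mirror_val v \<in> models C'" "bdd_above (delay_set C' (mirror_val v))"
    "w = delay (mirror_val v) (Sup (delay_set C' (mirror_val v)))"
    by (simp_all add: C'_def mirror_val_in_models delay_set_mirror delay_mirror_val)
  then show "w \<in> {delay v d | v d. v \<in> models C' \<and> bdd_above (delay_set C' v) \<and> d = Sup (delay_set C' v)}"
    by blast
next
  fix w assume "w \<in> {delay v d | v d. v \<in> models C' \<and> bdd_above (delay_set C' v) \<and> d = Sup (delay_set C' v)}"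
  then obtain v where v: "v \<in> models C'" "bdd_above (delay_set C' v)" "w = delay v (Sup (delay_set C' v))"
    by blast
  obtain u where u: "v = mirror_val u"
    using mirror_val_mirror_val by metis
  from v have "u \<in> models C" "bdd_above (undelay_set C u)"
    "w = mirror_val (undelay u (Sup (undelay_set C u)))"
    unfolding u by (simp_all add: C'_def mirror_val_in_models delay_set_mirror delay_mirror_val)
  then show "w \<in> mirror_val `
      {undelay v d | v d. v \<in> models C \<and> bdd_above (undelay_set C v) \<and> d = Sup (undelay_set C v)}"
    by blast
qed

theorem lb_constrs_eq_Sup_undelays:
  assumes "finite C"
  shows "(\<Union>\<psi>\<in>lower_constrs C. models (lb_constrs C \<psi>)) =
    {undelay v d | v d. v \<in> models C \<and> bdd_above (undelay_set C v) \<and> d = Sup (undelay_set C v)}"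
proof -
  have "mirror_val ` (\<Union>\<psi>\<in>lower_constrs C. models (lb_constrs C \<psi>)) = mirror_val `
      {undelay v d | v d. v \<in> models C \<and> bdd_above (undelay_set C v) \<and> d = Sup (undelay_set C v)}"
    unfolding mirror_UN_lb_constrs mirror_Sup_undelays
    using assms by (intro ub_constrs_eq_Sup_delays) simp
  then show ?thesis
    by (simp only: inj_image_eq_iff[OF inj_mirror_val])
qed

section \<open>Zones with implicit nonnegative clocks\<close>

lemma models_Diff_implied_by_Eq:
  assumes "k \<in> {Le, Eq, Ge}"
  shows "models ((S - {ClkC x k t}) \<union> {ClkC x Eq t} \<union> T) = models (S \<union> {ClkC x Eq t} \<union> T)"
  using assms by (auto simp: models_def)

lemma models_Un_clocks_nonneg:
  assumes "range (\<lambda>x. ClkC x Gt lt_zero) \<subseteq> S"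
  shows "models (S \<union> clocks_nonneg) = models S"
proof -
  have "sat v c" if v: "v \<in> models S" and c: "c \<in> clocks_nonneg" for v c
  proof -
    obtain x where "c = ClkC x Ge lt_zero"
      using c by (auto simp: clocks_nonneg_def)
    moreover have "sat v (ClkC x Gt lt_zero)"
      using v assms unfolding models_def by blast
    ultimately show ?thesis
      by simp
  qed
  then show ?thesis
    by (auto simp: models_def)
qed

lemma upper_closure_eq_uclosure: "upper_closure Z = uclosure (Z \<union> clocks_nonneg)"
  by (auto simp: upper_closure_def uclosure_def clocks_nonneg_def)

lemma lower_closure_eq_lclosure: "lower_closure Z = lclosure (Z \<union> clocks_nonneg)"
  by (auto simp: lower_closure_def lclosure_def clocks_nonneg_def)

lemma U_Temp_Un_clocks_nonneg: "U_Temp (Z \<union> clocks_nonneg) = U_Temp Z"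
  by (auto simp: U_Temp_def clocks_nonneg_def)

lemma L_Temp_eq_lower_constrs: "L_Temp Z = lower_constrs (Z \<union> clocks_nonneg)"
  by (auto simp: L_Temp_def lower_constrs_def clocks_nonneg_def)

lemma zone_sem_UB:
  assumes "\<psi> \<in> U_Temp Z"
  shows "zone_sem (UB Z \<psi>) = models (ub_constrs (Z \<union> clocks_nonneg) \<psi>)"
proof -
  obtain x k t where \<psi>: "\<psi> = ClkC x k t" "k \<in> {Lt, Le, Eq}"
    using assms unfolding U_Temp_def by blast
  let ?C = "Z \<union> clocks_nonneg"
  show ?thesis
  proof (cases "k = Lt")
    case strict: True
    have "zone_sem (UB Z \<psi>) = models ((uclosure ?C - {ClkC x Le t}) \<union> {ClkC x Eq t} \<union> clocks_nonneg)"
      by (simp add: \<psi> strict zone_sem_eq_models upper_closure_eq_uclosure)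
    also have "\<dots> = models ((uclosure ?C \<union> {ClkC x Eq t}) \<union> clocks_nonneg)"
      by (rule models_Diff_implied_by_Eq) simp
    also have "\<dots> = models (uclosure ?C \<union> {ClkC x Eq t})"
      by (rule models_Un_clocks_nonneg) (auto simp: uclosure_def clocks_nonneg_def)
    finally show ?thesis
      by (simp add: \<psi> strict)
  next
    case nonstrict: False
    have "zone_sem (UB Z \<psi>) = models ((Z - {ClkC x Le t}) \<union> {ClkC x Eq t} \<union> clocks_nonneg)"
      by (simp only: \<psi> nonstrict UB.simps if_False zone_sem_eq_models)
    also have "\<dots> = models ((Z \<union> {ClkC x Eq t}) \<union> clocks_nonneg)"
      by (rule models_Diff_implied_by_Eq) simp
    also have "\<dots> = models (ub_constrs ?C \<psi>)"
      by (rule arg_cong[where f = models]) (auto simp: \<psi> nonstrict)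
    finally show ?thesis .
  qed
qed

lemma zone_sem_LB:
  assumes "\<psi> \<in> L_Temp Z"
  shows "zone_sem (LB Z \<psi>) = models (lb_constrs (Z \<union> clocks_nonneg) \<psi>)"
proof -
  obtain x k t where \<psi>: "\<psi> = ClkC x k t" "k \<in> {Gt, Ge, Eq}"
    using assms unfolding L_Temp_def by blast
  let ?C = "Z \<union> clocks_nonneg"
  show ?thesis
  proof (cases "k = Gt")
    case strict: True
    have "zone_sem (LB Z \<psi>) = models ((lclosure ?C - {ClkC x Ge t}) \<union> {ClkC x Eq t} \<union> clocks_nonneg)"
      by (simp add: \<psi> strict zone_sem_eq_models lower_closure_eq_lclosure)
    also have "\<dots> = models ((lclosure ?C \<union> {ClkC x Eq t}) \<union> clocks_nonneg)"
      by (rule models_Diff_implied_by_Eq) simp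
    also have "\<dots> = models (lb_constrs ?C \<psi>)"
      by (rule arg_cong[where f = models]) (auto simp: \<psi> strict lclosure_def clocks_nonneg_def)
    finally show ?thesis .
  next
    case nonstrict: False
    have "zone_sem (LB Z \<psi>) = models ((Z - {ClkC x Ge t}) \<union> {ClkC x Eq t} \<union> clocks_nonneg)"
      by (simp only: \<psi> nonstrict LB.simps if_False zone_sem_eq_models)
    also have "\<dots> = models ((Z \<union> {ClkC x Eq t}) \<union> clocks_nonneg)"
      by (rule models_Diff_implied_by_Eq) simp
    also have "\<dots> = models (lb_constrs ?C \<psi>)"
      by (rule arg_cong[where f = models]) (auto simp: \<psi> nonstrict)
    finally show ?thesis .
  qed
qed

theorem theorem2:
  fixes Z :: "('x::finite, 'p::finite) constr set"
  assumes "finite Z"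
  shows "((\<Union>\<psi>\<in>U_Temp Z. zone_sem (UB Z \<psi>)) =
           {delay v d | v d. v \<in> zone_sem Z
              \<and> bdd_above {\<delta>. \<delta> \<ge> 0 \<and> delay v \<delta> \<in> zone_sem Z}
              \<and> d = Sup {\<delta>. \<delta> \<ge> 0 \<and> delay v \<delta> \<in> zone_sem Z}}) \<and>
         ((\<Union>\<psi>\<in>L_Temp Z. zone_sem (LB Z \<psi>)) =
           {undelay v d | v d. v \<in> zone_sem Z
              \<and> bdd_above {\<delta>. \<delta> \<ge> 0 \<and> undelay v \<delta> \<in> zone_sem Z}
              \<and> d = Sup {\<delta>. \<delta> \<ge> 0 \<and> undelay v \<delta> \<in> zone_sem Z}})"
proof -
  let ?C = "Z \<union> clocks_nonneg"
  have fin: "finite ?C"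
    using assms by (simp add: clocks_nonneg_def)
  have upper: "(\<Union>\<psi>\<in>U_Temp Z. zone_sem (UB Z \<psi>)) = (\<Union>\<psi>\<in>U_Temp ?C. models (ub_constrs ?C \<psi>))"
    unfolding U_Temp_Un_clocks_nonneg by (rule SUP_cong) (simp_all add: zone_sem_UB)
  have "(\<Union>\<psi>\<in>L_Temp Z. zone_sem (LB Z \<psi>)) = (\<Union>\<psi>\<in>L_Temp Z. models (lb_constrs ?C \<psi>))"
    by (rule SUP_cong) (simp_all add: zone_sem_LB)
  then have lower: "(\<Union>\<psi>\<in>L_Temp Z. zone_sem (LB Z \<psi>)) = (\<Union>\<psi>\<in>lower_constrs ?C. models (lb_constrs ?C \<psi>))"
    by (simp only: L_Temp_eq_lower_constrs)
  show ?thesis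
    unfolding upper lower zone_sem_eq_models[of Z] delay_set_def[symmetric] undelay_set_def[symmetric]
    by (intro conjI ub_constrs_eq_Sup_delays[OF fin] lb_constrs_eq_Sup_undelays[OF fin])
qed

end
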